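(* The robustness of activity $\mathsf A_r$ satisfies: (1) $\mathsf A_r(\rho)\in[0,d-1]$ for all $\rho\in\mathsf{St}(S)$, and the value $d-1$ is attained (e.g. by $\rho=|d\rangle\langle d|$); (2) $\mathsf A_r(\rho)=0$ if and only if $\rho\in\mathsf P(S)$; (3) $\mathsf A_r(p\rho_1+(1-p)\rho_2)\le p\,\mathsf A_r(\rho_1)+(1-p)\,\mathsf A_r(\rho_2)$ for all $p\in[0,1]$ and states $\rho_1,\rho_2$; (4) $\mathsf A_r(\mathcal C(\rho))\le\mathsf A_r(\rho)$ for every passivity-preserving channel $\mathcal C$ and every state $\rho$.
   Context: $S$ is a $d$-dimensional quantum system with non-degenerate Hamiltonian $H=\sum_i E_i|i\rangle\langle i|$, $E_1<\dots<E_d$. $\mathsf{St}(S)$ is the set of density matrices; $\mathsf P(S)$ is the set of passive states, i.e. states $\sum_i p_i|i\rangle\langle i|$ with $p_1\ge\dots\ge p_d$. The robustness of activity is $\mathsf A_r(\rho)=\min\{t\ge0:\ \exists\sigma\in\mathsf{St}(S)\text{ with }(\rho+t\sigma)/(1+t)\in\mathsf P(S)\}$. A channel $\mathcal C$ is passivity-preserving if $\mathcal C(\mathsf P(S))\subseteq\mathsf P(S)$. *)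

theory Defs
  imports Complex_Main
begin

text \<open>Operators on the d-dimensional system S are represented as functions
  nat => nat => complex giving the matrix entries in the energy eigenbasis
  |0>,...,|d-1> (0-based; paper's |i> is index i-1), ordered by increasing energy.\<close>

type_synonym cmat = "nat \<Rightarrow> nat \<Rightarrow> complex"

definition supported :: "nat \<Rightarrow> cmat \<Rightarrow> bool" where
  "supported d A \<longleftrightarrow> (\<forall>i j. \<not> (i < d \<and> j < d) \<longrightarrow> A i j = 0)"

definition hermitian :: "nat \<Rightarrow> cmat \<Rightarrow> bool" where
  "hermitian d A \<longleftrightarrow> (\<forall>i<d. \<forall>j<d. A i j = cnj (A j i))"

definition psd :: "nat \<Rightarrow> cmat \<Rightarrow> bool" where
  "psd d A \<longleftrightarrow> hermitian d A \<and>
     (\<forall>x :: nat \<Rightarrow> complex. 0 \<le> Re (\<Sum>i<d. \<Sum>j<d. cnj (x i) * A i j * x j))"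

definition trace :: "nat \<Rightarrow> cmat \<Rightarrow> complex" where
  "trace d A = (\<Sum>i<d. A i i)"

definition is_state :: "nat \<Rightarrow> cmat \<Rightarrow> bool" where
  "is_state d \<rho> \<longleftrightarrow> supported d \<rho> \<and> psd d \<rho> \<and> trace d \<rho> = 1"

definition passive_state :: "nat \<Rightarrow> cmat \<Rightarrow> bool" where
  "passive_state d \<rho> \<longleftrightarrow> is_state d \<rho> \<and> (\<forall>i j. i \<noteq> j \<longrightarrow> \<rho> i j = 0) \<and>
     (\<forall>i. Suc i < d \<longrightarrow> Re (\<rho> (Suc i) (Suc i)) \<le> Re (\<rho> i i))"

definition mix_t :: "cmat \<Rightarrow> real \<Rightarrow> cmat \<Rightarrow> cmat" where
  "mix_t \<rho> t \<sigma> = (\<lambda>i j. (\<rho> i j + complex_of_real t * \<sigma> i j) / complex_of_real (1 + t))"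

text \<open>Robustness of activity (the paper's min is rendered as Inf).\<close>
definition robustness_activity :: "nat \<Rightarrow> cmat \<Rightarrow> real" where
  "robustness_activity d \<rho> =
     Inf {t. 0 \<le> t \<and> (\<exists>\<sigma>. is_state d \<sigma> \<and> passive_state d (mix_t \<rho> t \<sigma>))}"

text \<open>Quantum channel on S (completely positive trace-preserving map), given by a
  Kraus representation: C(A) = sum_k K_k A K_k^dagger with sum_k K_k^dagger K_k = I.\<close>
definition channel :: "nat \<Rightarrow> (cmat \<Rightarrow> cmat) \<Rightarrow> bool" where
  "channel d C \<longleftrightarrow> (\<exists>(n::nat) (K :: nat \<Rightarrow> cmat).
     (\<forall>i<d. \<forall>j<d. (\<Sum>k<n. \<Sum>l<d. cnj (K k l i) * K k l j) = (if i = j then 1 else 0)) \<and>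
     (\<forall>A i j. C A i j =
        (if i < d \<and> j < d then (\<Sum>k<n. \<Sum>l<d. \<Sum>m<d. K k i l * A l m * cnj (K k j m)) else 0)))"

definition passivity_preserving :: "nat \<Rightarrow> (cmat \<Rightarrow> cmat) \<Rightarrow> bool" where
  "passivity_preserving d C \<longleftrightarrow> (\<forall>\<sigma>. passive_state d \<sigma> \<longrightarrow> passive_state d (C \<sigma>))"

text \<open>The pure state |d><d| (highest-energy eigenstate, index d-1).\<close>
definition top_state :: "nat \<Rightarrow> cmat" where
  "top_state d = (\<lambda>i j. if i = d - 1 \<and> j = d - 1 then 1 else 0)"

end

theory Submission
  imports Defs
begin

text \<open>The robustness of activity is the infimum of the weights t for which \<rho> + t \<sigma> is a
  multiple of a passive state for some state \<sigma>. Such weights combine convexly and are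
  transported by passivity-preserving channels, which gives convexity and monotonicity.
  The weight d - 1 always suffices: a state satisfies \<rho> \<le> I, so (I - \<rho>)/(d - 1) is a state,
  and \<rho> + (I - \<rho>) = I is passive. For |d\<rangle>\<langle>d| nothing smaller works, because the least
  population of a passive state is at most 1/d. Finally a feasible weight t makes \<rho> passive up
  to errors of size t, since entries of states have modulus at most one; hence robustness zero
  forces passivity.\<close>

section \<open>Quadratic forms\<close>

lemma sum_swap_outer:
  "(\<Sum>i\<in>I. \<Sum>j\<in>J. \<Sum>k\<in>K. f i j k) = (\<Sum>k\<in>K. \<Sum>i\<in>I. \<Sum>j\<in>J. f i j k)"
  by (simp only: sum.swap[of _ J K] sum.swap[of _ I K])

lemma sum_swap_pairs:
  "(\<Sum>i\<in>I. \<Sum>j\<in>J. \<Sum>k\<in>K. \<Sum>l\<in>L. f i j k l) = (\<Sum>k\<in>K. \<Sum>l\<in>L. \<Sum>i\<in>I. \<Sum>j\<in>J. f i j k l)"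
  by (simp only: sum.swap[of _ J K] sum.swap[of _ I K] sum.swap[of _ J L] sum.swap[of _ I L])

definition quad_form :: "nat \<Rightarrow> cmat \<Rightarrow> (nat \<Rightarrow> complex) \<Rightarrow> complex" where
  "quad_form d A x = (\<Sum>i<d. \<Sum>j<d. cnj (x i) * A i j * x j)"

lemma psd_iff_quad_form: "psd d A \<longleftrightarrow> hermitian d A \<and> (\<forall>x. 0 \<le> Re (quad_form d A x))"
  unfolding psd_def quad_form_def ..

lemma quad_form_cong:
  "(\<And>i j. i < d \<Longrightarrow> j < d \<Longrightarrow> A i j = B i j) \<Longrightarrow> quad_form d A x = quad_form d B x"
  unfolding quad_form_def by (intro sum.cong refl) auto

lemma quad_form_scale: "quad_form d (\<lambda>i j. c * A i j) x = c * quad_form d A x"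
  unfolding quad_form_def by (simp add: sum_distrib_left ac_simps)

lemma quad_form_linear:
  "quad_form d (\<lambda>i j. a * A i j + b * B i j) x = a * quad_form d A x + b * quad_form d B x"
  unfolding quad_form_def by (simp add: sum.distrib sum_distrib_left algebra_simps)

lemma quad_form_identity:
  "quad_form d (\<lambda>i j. if i = j then 1 else 0) x = of_real (\<Sum>i<d. (cmod (x i))\<^sup>2)"
proof -
  have "quad_form d (\<lambda>i j. if i = j then 1 else 0) x = (\<Sum>i<d. x i * cnj (x i))"
    unfolding quad_form_def by (simp add: if_distrib if_distribR mult.commute cong: if_cong)
  then show ?thesis by (simp add: complex_norm_square [symmetric] del: of_real_power)
qed

lemma quad_form_supported_on:
  assumes "S \<subseteq> {..<d}" "\<And>i j. i \<notin> S \<or> j \<notin> S \<Longrightarrow> cnj (x i) * A i j * x j = 0"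
  shows "quad_form d A x = (\<Sum>i\<in>S. \<Sum>j\<in>S. cnj (x i) * A i j * x j)"
proof -
  have inner: "(\<Sum>j<d. cnj (x i) * A i j * x j) = (\<Sum>j\<in>S. cnj (x i) * A i j * x j)" for i
    using assms by (intro sum.mono_neutral_right) auto
  have "quad_form d A x = (\<Sum>i\<in>S. \<Sum>j<d. cnj (x i) * A i j * x j)"
    unfolding quad_form_def using assms by (intro sum.mono_neutral_right) (auto intro: sum.neutral)
  then show ?thesis by (simp only: inner)
qed

lemma quad_form_sum: "quad_form d (\<lambda>i j. \<Sum>k\<in>S. B k i j) x = (\<Sum>k\<in>S. quad_form d (B k) x)"
  unfolding quad_form_def by (simp add: sum_distrib_left sum_distrib_right) (rule sum_swap_outer)

lemma quad_form_congruence: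
  "quad_form d (\<lambda>i j. \<Sum>l<d. \<Sum>m<d. K i l * A l m * cnj (K j m)) x
     = quad_form d A (\<lambda>m. \<Sum>j<d. cnj (K j m) * x j)"
proof -
  have "quad_form d (\<lambda>i j. \<Sum>l<d. \<Sum>m<d. K i l * A l m * cnj (K j m)) x
      = (\<Sum>i<d. \<Sum>j<d. \<Sum>l<d. \<Sum>m<d. cnj (x i) * K i l * A l m * cnj (K j m) * x j)"
    unfolding quad_form_def by (simp add: sum_distrib_left sum_distrib_right mult.assoc)
  also have "\<dots> = (\<Sum>l<d. \<Sum>m<d. \<Sum>i<d. \<Sum>j<d. cnj (x i) * K i l * A l m * cnj (K j m) * x j)"
    by (rule sum_swap_pairs)
  also have "\<dots> = (\<Sum>l<d. \<Sum>m<d. \<Sum>j<d. \<Sum>i<d. cnj (x i) * K i l * A l m * cnj (K j m) * x j)"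
    by (rule sum.cong[OF refl], rule sum.cong[OF refl], rule sum.swap)
  also have "\<dots> = quad_form d A (\<lambda>m. \<Sum>j<d. cnj (K j m) * x j)"
    unfolding quad_form_def by (simp add: sum_distrib_left sum_distrib_right mult.assoc mult.left_commute)
  finally show ?thesis .
qed

lemma psd_diag_real:
  assumes "psd d A" "i < d"
  shows "A i i = of_real (Re (A i i))" "0 \<le> Re (A i i)"
proof -
  have "A i i = cnj (A i i)" using assms unfolding psd_def hermitian_def by blast
  then show "A i i = of_real (Re (A i i))" by (metis Reals_cnj_iff complex_is_Real_iff of_real_Re)
  have "0 \<le> Re (quad_form d A (\<lambda>k. if k = i then 1 else 0))"
    using assms(1) unfolding psd_iff_quad_form by blast
  also have "quad_form d A (\<lambda>k. if k = i then 1 else 0) = A i i"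
    using assms(2) by (subst quad_form_supported_on[of "{i}"]) auto
  finally show "0 \<le> Re (A i i)" .
qed

lemma quadratic_nonneg_imp_le:
  fixes a b c :: real
  assumes nonneg: "\<And>r. 0 \<le> a * r\<^sup>2 - 2 * c * r + b * c" and "0 \<le> a" "0 \<le> b" "0 \<le> c"
  shows "c \<le> a * b"
proof (cases "c = 0")
  case False
  then have "0 < c" using \<open>0 \<le> c\<close> by simp
  show ?thesis
  proof (cases "a = 0")
    case True
    then show ?thesis using nonneg[of "(b + 1) / 2"] \<open>0 < c\<close> by (simp add: algebra_simps)
  next
    case False
    then have "0 < a" using \<open>0 \<le> a\<close> by simp
    have "0 \<le> a * (c / a)\<^sup>2 - 2 * c * (c / a) + b * c" by (rule nonneg)
    also have "\<dots> = c * (a * b - c) / a" using \<open>0 < a\<close> by (simp add: power2_eq_square field_simps)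
    finally show ?thesis using \<open>0 < a\<close> \<open>0 < c\<close> by (simp add: zero_le_divide_iff zero_le_mult_iff)
  qed
qed (simp add: assms)

lemma psd_entry_bound:
  assumes psd: "psd d A" and "i < d" "j < d"
  shows "(cmod (A i j))\<^sup>2 \<le> Re (A i i) * Re (A j j)"
proof (cases "i = j")
  case True
  have "cmod (A i i) = cmod (of_real (Re (A i i)) :: complex)"
    using psd_diag_real(1)[OF psd \<open>i < d\<close>] by (rule arg_cong)
  then have "cmod (A i i) = Re (A i i)" using psd_diag_real(2)[OF psd \<open>i < d\<close>] by simp
  then show ?thesis using True by (simp add: power2_eq_square)
next
  case False
  define s where "s = A i j"
  have A_ji: "A j i = cnj s" unfolding s_def using assms unfolding psd_def hermitian_def by blast
  note diag = psd_diag_real[OF psd \<open>i < d\<close>] psd_diag_real[OF psd \<open>j < d\<close>]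
  have norm_s: "s * cnj s = of_real ((cmod s)\<^sup>2)" by (rule complex_norm_square [symmetric])
  have form: "quad_form d A (\<lambda>k. if k = i then of_real r else if k = j then - cnj s else 0)
      = of_real (Re (A i i) * r\<^sup>2 - 2 * (cmod s)\<^sup>2 * r + Re (A j j) * (cmod s)\<^sup>2)" for r
  proof -
    have "quad_form d A (\<lambda>k. if k = i then of_real r else if k = j then - cnj s else 0)
        = of_real r * A i i * of_real r - of_real r * (s * cnj s)
          - (s * cnj s) * of_real r + A j j * (s * cnj s)"
      using \<open>i < d\<close> \<open>j < d\<close> False A_ji
      by (subst quad_form_supported_on[of "{i, j}"]) (auto simp: s_def algebra_simps)
    also have "\<dots> = of_real (Re (A i i) * r\<^sup>2 - 2 * (cmod s)\<^sup>2 * r + Re (A j j) * (cmod s)\<^sup>2)"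
      by (subst (1 2) diag(1), subst diag(3), simp only: norm_s, simp add: power2_eq_square algebra_simps)
    finally show ?thesis .
  qed
  show ?thesis unfolding s_def[symmetric]
  proof (rule quadratic_nonneg_imp_le)
    fix r
    have "0 \<le> Re (quad_form d A (\<lambda>k. if k = i then of_real r else if k = j then - cnj s else 0))"
      using psd unfolding psd_iff_quad_form by blast
    then show "0 \<le> Re (A i i) * r\<^sup>2 - 2 * (cmod s)\<^sup>2 * r + Re (A j j) * (cmod s)\<^sup>2"
      unfolding form by simp
  qed (use diag(2,4) in auto)
qed

section \<open>Density matrices\<close>

lemma is_stateI:
  assumes "supported d A" "hermitian d A" "\<And>x. 0 \<le> Re (quad_form d A x)" "trace d A = 1"
  shows "is_state d A"
  using assms unfolding is_state_def psd_iff_quad_form by blast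

lemma state_psd: "is_state d A \<Longrightarrow> psd d A"
  unfolding is_state_def by blast

lemma state_vanishes_outside: "is_state d A \<Longrightarrow> \<not> (i < d \<and> j < d) \<Longrightarrow> A i j = 0"
  unfolding is_state_def supported_def by blast

lemma state_hermitian: "is_state d A \<Longrightarrow> i < d \<Longrightarrow> j < d \<Longrightarrow> A i j = cnj (A j i)"
  unfolding is_state_def psd_def hermitian_def by blast

lemma state_trace_Re: "is_state d A \<Longrightarrow> (\<Sum>i<d. Re (A i i)) = 1"
  unfolding is_state_def trace_def by (metis Re_sum one_complex.simps(1))

lemma state_diag_nonneg: "is_state d A \<Longrightarrow> i < d \<Longrightarrow> 0 \<le> Re (A i i)"
  using psd_diag_real(2) state_psd by blast

lemma state_diag_le_one:
  assumes "is_state d A" "i < d"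
  shows "Re (A i i) \<le> 1"
proof -
  have "Re (A i i) \<le> (\<Sum>k<d. Re (A k k))"
    using assms state_diag_nonneg by (intro member_le_sum) auto
  then show ?thesis using state_trace_Re[OF assms(1)] by simp
qed

lemma state_entry_norm_le_one:
  assumes "is_state d A" "i < d" "j < d"
  shows "cmod (A i j) \<le> 1"
proof -
  have "(cmod (A i j))\<^sup>2 \<le> Re (A i i) * Re (A j j)"
    using assms psd_entry_bound state_psd by blast
  also have "\<dots> \<le> 1"
    using assms state_diag_le_one state_diag_nonneg by (simp add: mult_le_one)
  finally show ?thesis by (simp add: power_le_one_iff)
qed

text \<open>Each term of the quadratic form is bounded via the 2x2 minor estimate and AM-GM; the
  bounds sum to the trace times the squared norm of x.\<close>

lemma state_quad_form_le:
  assumes "is_state d A"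
  shows "Re (quad_form d A x) \<le> (\<Sum>i<d. (cmod (x i))\<^sup>2)"
proof -
  let ?a = "\<lambda>i. Re (A i i)" and ?n = "\<lambda>i. cmod (x i)"
  have term_bound: "Re (cnj (x i) * A i j * x j) \<le> ((?n i)\<^sup>2 * ?a j + (?n j)\<^sup>2 * ?a i) / 2"
    if "i < d" "j < d" for i j
  proof -
    have "Re (cnj (x i) * A i j * x j) \<le> cmod (cnj (x i) * A i j * x j)"
      by (rule complex_Re_le_cmod)
    also have "\<dots> = ?n i * cmod (A i j) * ?n j"
      by (simp add: norm_mult)
    also have "\<dots> \<le> sqrt ((?n i)\<^sup>2 * ?a j * ((?n j)\<^sup>2 * ?a i))"
    proof (rule real_le_rsqrt)
      have "(?n i * cmod (A i j) * ?n j)\<^sup>2 = (?n i)\<^sup>2 * (?n j)\<^sup>2 * (cmod (A i j))\<^sup>2"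
        by (simp add: power_mult_distrib)
      also have "\<dots> \<le> (?n i)\<^sup>2 * (?n j)\<^sup>2 * (?a i * ?a j)"
        using psd_entry_bound[OF state_psd[OF assms] that] by (intro mult_left_mono) auto
      finally show "(?n i * cmod (A i j) * ?n j)\<^sup>2 \<le> (?n i)\<^sup>2 * ?a j * ((?n j)\<^sup>2 * ?a i)"
        by (simp add: algebra_simps)
    qed
    also have "\<dots> \<le> ((?n i)\<^sup>2 * ?a j + (?n j)\<^sup>2 * ?a i) / 2"
      using state_diag_nonneg[OF assms] that by (intro arith_geo_mean_sqrt) auto
    finally show ?thesis .
  qed
  have "Re (quad_form d A x) = (\<Sum>i<d. \<Sum>j<d. Re (cnj (x i) * A i j * x j))"
    unfolding quad_form_def by simp
  also have "\<dots> \<le> (\<Sum>i<d. \<Sum>j<d. ((?n i)\<^sup>2 * ?a j + (?n j)\<^sup>2 * ?a i) / 2)"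
    using term_bound by (intro sum_mono) auto
  also have "\<dots> = ((\<Sum>i<d. \<Sum>j<d. (?n i)\<^sup>2 * ?a j) + (\<Sum>i<d. \<Sum>j<d. (?n j)\<^sup>2 * ?a i)) / 2"
    by (simp add: sum.distrib sum_divide_distrib add_divide_distrib)
  also have "\<dots> = (\<Sum>i<d. \<Sum>j<d. (?n i)\<^sup>2 * ?a j)"
    using sum.swap[of "\<lambda>i j. (?n j)\<^sup>2 * ?a i" "{..<d}" "{..<d}"] by simp
  also have "\<dots> = (\<Sum>i<d. (?n i)\<^sup>2)"
    using state_trace_Re[OF assms] by (simp flip: sum_product)
  finally show ?thesis .
qed

lemma state_convex_combination:
  assumes "is_state d A" "is_state d B" "0 \<le> p" "p \<le> 1"
  shows "is_state d (\<lambda>i j. of_real p * A i j + of_real (1 - p) * B i j)"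
proof (rule is_stateI)
  show "supported d (\<lambda>i j. of_real p * A i j + of_real (1 - p) * B i j)"
    using state_vanishes_outside[OF assms(1)] state_vanishes_outside[OF assms(2)]
    unfolding supported_def by simp
  show "hermitian d (\<lambda>i j. of_real p * A i j + of_real (1 - p) * B i j)"
    unfolding hermitian_def
  proof (intro allI impI)
    fix i j assume "i < d" "j < d"
    then have "A i j = cnj (A j i)" "B i j = cnj (B j i)"
      using assms(1,2) state_hermitian by blast+
    then show "of_real p * A i j + of_real (1 - p) * B i j
        = cnj (of_real p * A j i + of_real (1 - p) * B j i)"
      by (simp only:) simp
  qed
  show "0 \<le> Re (quad_form d (\<lambda>i j. of_real p * A i j + of_real (1 - p) * B i j) x)" for x
  proof -
    have "0 \<le> Re (quad_form d A x)" "0 \<le> Re (quad_form d B x)"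
      using assms(1,2) state_psd unfolding psd_iff_quad_form by blast+
    then show ?thesis using assms(3,4) unfolding quad_form_linear by simp
  qed
  show "trace d (\<lambda>i j. of_real p * A i j + of_real (1 - p) * B i j) = 1"
    using assms(1,2) unfolding trace_def is_state_def
    by (simp add: sum.distrib sum_distrib_left[symmetric] flip: of_real_add)
qed

lemma cone_combination:
  assumes convex: "\<And>A B p. P A \<Longrightarrow> P B \<Longrightarrow> 0 \<le> p \<Longrightarrow> p \<le> 1
      \<Longrightarrow> P (\<lambda>i j. of_real p * A i j + of_real (1 - p) * B i j)"
    and "P A" "P B" "0 \<le> a" "0 \<le> b"
  shows "\<exists>C. P C \<and> (\<forall>i j. of_real a * A i j + of_real b * B i j = of_real (a + b) * C i j)"
proof (cases "a + b = 0")
  case True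
  then have "a = 0" "b = 0" using assms by auto
  then show ?thesis using assms by (intro exI[of _ A]) auto
next
  case False
  then have "0 < a + b" using assms by simp
  let ?C = "\<lambda>i j. of_real (a / (a + b)) * A i j + of_real (1 - a / (a + b)) * B i j"
  have "(a + b) * (a / (a + b)) = a" "(a + b) * (1 - a / (a + b)) = b"
    using \<open>0 < a + b\<close> by (simp_all add: field_simps)
  then have "of_real a * A i j + of_real b * B i j = of_real (a + b) * ?C i j" for i j
    by (simp only: distrib_left mult.assoc [symmetric] of_real_mult [symmetric])
  moreover have "P ?C" using assms \<open>0 < a + b\<close> by (intro convex) auto
  ultimately show ?thesis by blast
qed

lemma state_complement:
  assumes "is_state d \<rho>" "2 \<le> d"
  shows "is_state d (\<lambda>i j. if i < d \<and> j < d
                            then ((if i = j then 1 else 0) - \<rho> i j) / of_real (real d - 1) else 0)"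
    (is "is_state d ?\<sigma>")
proof (rule is_stateI)
  let ?c = "real d - 1"
  have "0 < ?c" using assms(2) by simp
  show "supported d ?\<sigma>" unfolding supported_def by simp
  show "hermitian d ?\<sigma>"
    unfolding hermitian_def
  proof (intro allI impI)
    fix i j assume "i < d" "j < d"
    moreover from this have "\<rho> i j = cnj (\<rho> j i)" by (rule state_hermitian[OF assms(1)])
    ultimately show "?\<sigma> i j = cnj (?\<sigma> j i)" by (simp only:) simp
  qed
  show "0 \<le> Re (quad_form d ?\<sigma> x)" for x
  proof -
    have "quad_form d ?\<sigma> x = of_real (1 / ?c) * quad_form d (\<lambda>i j. if i = j then 1 else 0) x
                            + of_real (- 1 / ?c) * quad_form d \<rho> x"
      unfolding quad_form_linear [symmetric]
      by (rule quad_form_cong) (simp add: diff_divide_distrib)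
    then have "Re (quad_form d ?\<sigma> x) = ((\<Sum>i<d. (cmod (x i))\<^sup>2) - Re (quad_form d \<rho> x)) / ?c"
      unfolding quad_form_identity by (simp add: diff_divide_distrib)
    then show ?thesis using state_quad_form_le[OF assms(1)] \<open>0 < ?c\<close> by simp
  qed
  have "trace d ?\<sigma> = (of_nat d - trace d \<rho>) / of_real ?c"
    unfolding trace_def by (simp add: sum_divide_distrib [symmetric] sum_subtractf)
  then show "trace d ?\<sigma> = 1"
    using assms(1) \<open>0 < ?c\<close> unfolding is_state_def by simp
qed

lemma top_state_is_state:
  assumes "1 \<le> d"
  shows "is_state d (top_state d)"
proof (rule is_stateI)
  show "0 \<le> Re (quad_form d (top_state d) x)" for x
  proof -
    have "quad_form d (top_state d) x = cnj (x (d - 1)) * x (d - 1)"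
      using assms by (subst quad_form_supported_on[of "{d - 1}"]) (auto simp: top_state_def)
    then show ?thesis by simp
  qed
qed (use assms in \<open>auto simp: supported_def hermitian_def trace_def top_state_def\<close>)

section \<open>Passive states\<close>

lemma passive_convex_combination:
  assumes "passive_state d A" "passive_state d B" "0 \<le> p" "p \<le> 1"
  shows "passive_state d (\<lambda>i j. of_real p * A i j + of_real (1 - p) * B i j)"
proof -
  have "Re (B (Suc i) (Suc i)) \<le> Re (B i i)" "Re (A (Suc i) (Suc i)) \<le> Re (A i i)" if "Suc i < d" for i
    using assms(1,2) that unfolding passive_state_def by blast+
  then have "p * Re (A (Suc i) (Suc i)) + (1 - p) * Re (B (Suc i) (Suc i))
      \<le> p * Re (A i i) + (1 - p) * Re (B i i)" if "Suc i < d" for i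
    using assms(3,4) that by (intro add_mono mult_left_mono) auto
  then show ?thesis
    using assms state_convex_combination unfolding passive_state_def by simp
qed

lemma passive_diag_antimono:
  assumes "passive_state d \<tau>" "i \<le> j" "j < d"
  shows "Re (\<tau> j j) \<le> Re (\<tau> i i)"
  using assms(2,3)
proof (induction j rule: dec_induct)
  case (step j)
  then have "Re (\<tau> (Suc j) (Suc j)) \<le> Re (\<tau> j j)"
    using assms(1) unfolding passive_state_def by blast
  then show ?case using step by simp
qed simp

lemma passive_last_population_le:
  assumes "passive_state d \<tau>" "1 \<le> d"
  shows "real d * Re (\<tau> (d - 1) (d - 1)) \<le> 1"
proof -
  have "(\<Sum>i<d. Re (\<tau> (d - 1) (d - 1))) \<le> (\<Sum>i<d. Re (\<tau> i i))"
    using assms by (intro sum_mono passive_diag_antimono) auto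
  also have "\<dots> = 1"
    using assms(1) state_trace_Re unfolding passive_state_def by blast
  finally show ?thesis by simp
qed

lemma state_dim_one_passive: "is_state 1 \<rho> \<Longrightarrow> passive_state 1 \<rho>"
  unfolding passive_state_def using state_vanishes_outside[of 1 \<rho>] by (auto simp: neq_iff)

definition uniform_state :: "nat \<Rightarrow> cmat" where
  "uniform_state d = (\<lambda>i j. if i < d \<and> j < d \<and> i = j then 1 / of_nat d else 0)"

lemma passive_uniform_state:
  assumes "1 \<le> d"
  shows "passive_state d (uniform_state d)"
proof -
  have "is_state d (uniform_state d)"
  proof (rule is_stateI)
    have "quad_form d (uniform_state d) x = of_real (1 / real d) * quad_form d (\<lambda>i j. if i = j then 1 else 0) x"
      for x
      unfolding quad_form_scale [symmetric] by (rule quad_form_cong) (simp add: uniform_state_def)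
    then show "0 \<le> Re (quad_form d (uniform_state d) x)" for x
      unfolding quad_form_identity by (simp add: sum_nonneg)
  qed (use assms in \<open>auto simp: supported_def hermitian_def trace_def uniform_state_def\<close>)
  then show ?thesis unfolding passive_state_def by (simp add: uniform_state_def)
qed

section \<open>Kraus maps\<close>

definition kraus_map :: "nat \<Rightarrow> nat \<Rightarrow> (nat \<Rightarrow> cmat) \<Rightarrow> cmat \<Rightarrow> cmat" where
  "kraus_map d n K A = (\<lambda>i j. if i < d \<and> j < d
     then \<Sum>k<n. \<Sum>l<d. \<Sum>m<d. K k i l * A l m * cnj (K k j m) else 0)"

definition kraus_complete :: "nat \<Rightarrow> nat \<Rightarrow> (nat \<Rightarrow> cmat) \<Rightarrow> bool" where
  "kraus_complete d n K \<longleftrightarrow>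
     (\<forall>i<d. \<forall>j<d. (\<Sum>k<n. \<Sum>l<d. cnj (K k l i) * K k l j) = (if i = j then 1 else 0))"

lemma channel_kraus_map:
  assumes "channel d C"
  obtains n K where "kraus_complete d n K" "C = kraus_map d n K"
  using assms unfolding channel_def kraus_complete_def kraus_map_def fun_eq_iff by blast

lemma kraus_map_hermitian:
  assumes "hermitian d A"
  shows "hermitian d (kraus_map d n K A)"
  unfolding hermitian_def
proof (intro allI impI)
  fix i j assume "i < d" "j < d"
  have "cnj (kraus_map d n K A j i) = (\<Sum>k<n. \<Sum>l<d. \<Sum>m<d. K k i m * cnj (A l m) * cnj (K k j l))"
    using \<open>i < d\<close> \<open>j < d\<close> by (simp add: kraus_map_def ac_simps)
  also have "\<dots> = (\<Sum>k<n. \<Sum>l<d. \<Sum>m<d. K k i m * A m l * cnj (K k j l))"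
    using assms unfolding hermitian_def by (intro sum.cong refl) (metis lessThan_iff)
  also have "\<dots> = (\<Sum>k<n. \<Sum>m<d. \<Sum>l<d. K k i m * A m l * cnj (K k j l))"
    by (rule sum.cong[OF refl], rule sum.swap)
  also have "\<dots> = kraus_map d n K A i j"
    using \<open>i < d\<close> \<open>j < d\<close> by (simp add: kraus_map_def)
  finally show "kraus_map d n K A i j = cnj (kraus_map d n K A j i)" by simp
qed

lemma kraus_map_psd:
  assumes "psd d A"
  shows "psd d (kraus_map d n K A)"
  unfolding psd_iff_quad_form
proof (intro conjI allI)
  show "hermitian d (kraus_map d n K A)"
    using assms unfolding psd_def by (intro kraus_map_hermitian) blast
  fix x
  have "quad_form d (kraus_map d n K A) x
      = quad_form d (\<lambda>i j. \<Sum>k<n. \<Sum>l<d. \<Sum>m<d. K k i l * A l m * cnj (K k j m)) x"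
    by (rule quad_form_cong) (simp add: kraus_map_def)
  also have "\<dots> = (\<Sum>k<n. quad_form d A (\<lambda>m. \<Sum>j<d. cnj (K k j m) * x j))"
    by (subst quad_form_sum) (simp only: quad_form_congruence)
  finally show "0 \<le> Re (quad_form d (kraus_map d n K A) x)"
    using assms unfolding psd_iff_quad_form by (simp add: sum_nonneg)
qed

lemma kraus_map_trace:
  assumes "kraus_complete d n K"
  shows "trace d (kraus_map d n K A) = trace d A"
proof -
  have "trace d (kraus_map d n K A) = (\<Sum>i<d. \<Sum>k<n. \<Sum>l<d. \<Sum>m<d. K k i l * A l m * cnj (K k i m))"
    unfolding trace_def kraus_map_def by simp
  also have "\<dots> = (\<Sum>k<n. \<Sum>i<d. \<Sum>l<d. \<Sum>m<d. K k i l * A l m * cnj (K k i m))"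
    by (rule sum.swap)
  also have "\<dots> = (\<Sum>l<d. \<Sum>m<d. \<Sum>k<n. \<Sum>i<d. K k i l * A l m * cnj (K k i m))"
    by (rule sum_swap_pairs)
  also have "\<dots> = (\<Sum>l<d. \<Sum>m<d. A l m * (\<Sum>k<n. \<Sum>i<d. cnj (K k i m) * K k i l))"
    by (simp add: sum_distrib_left ac_simps)
  also have "\<dots> = (\<Sum>l<d. \<Sum>m<d. A l m * (if m = l then 1 else 0))"
    using assms unfolding kraus_complete_def by (intro sum.cong refl) simp
  also have "\<dots> = trace d A"
    unfolding trace_def by (simp add: if_distrib cong: if_cong)
  finally show ?thesis .
qed

lemma kraus_map_state:
  assumes "kraus_complete d n K" "is_state d A"
  shows "is_state d (kraus_map d n K A)"
  using assms kraus_map_psd kraus_map_trace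
  unfolding is_state_def supported_def by (simp add: kraus_map_def)

lemma kraus_map_mix_t: "kraus_map d n K (mix_t \<rho> t \<sigma>) = mix_t (kraus_map d n K \<rho>) t (kraus_map d n K \<sigma>)"
  unfolding kraus_map_def mix_t_def fun_eq_iff
  by (simp add: sum_divide_distrib [symmetric] sum.distrib sum_distrib_left add_divide_distrib
      ring_distribs ac_simps)

section \<open>Robustness of activity\<close>

definition robustness_weights :: "nat \<Rightarrow> cmat \<Rightarrow> real set" where
  "robustness_weights d \<rho> = {t. 0 \<le> t \<and> (\<exists>\<sigma>. is_state d \<sigma> \<and> passive_state d (mix_t \<rho> t \<sigma>))}"

lemma robustness_activity_eq_Inf: "robustness_activity d \<rho> = Inf (robustness_weights d \<rho>)"
  unfolding robustness_activity_def robustness_weights_def ..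

lemma mem_robustness_weights_iff:
  "t \<in> robustness_weights d \<rho> \<longleftrightarrow> 0 \<le> t \<and> (\<exists>\<sigma> \<tau>. is_state d \<sigma> \<and> passive_state d \<tau> \<and>
     (\<forall>i j. \<rho> i j + of_real t * \<sigma> i j = of_real (1 + t) * \<tau> i j))"
proof (cases "0 \<le> t")
  case True
  then have nz: "complex_of_real (1 + t) \<noteq> 0" by (simp only: of_real_eq_0_iff)
  have "(\<forall>i j. \<rho> i j + of_real t * \<sigma> i j = of_real (1 + t) * \<tau> i j) \<longleftrightarrow> mix_t \<rho> t \<sigma> = \<tau>"
    for \<sigma> \<tau>
    unfolding mix_t_def fun_eq_iff using nz by (auto simp: field_simps)
  then show ?thesis unfolding robustness_weights_def by auto
qed (simp add: robustness_weights_def)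

lemma robustness_weights_bdd_below: "bdd_below (robustness_weights d \<rho>)"
  unfolding robustness_weights_def bdd_below_def by auto

lemma robustness_activity_le: "t \<in> robustness_weights d \<rho> \<Longrightarrow> robustness_activity d \<rho> \<le> t"
  unfolding robustness_activity_eq_Inf by (rule cInf_lower[OF _ robustness_weights_bdd_below])

lemma robustness_activity_nonneg:
  "robustness_weights d \<rho> \<noteq> {} \<Longrightarrow> 0 \<le> robustness_activity d \<rho>"
  unfolding robustness_activity_eq_Inf by (rule cInf_greatest) (auto simp: robustness_weights_def)

lemma robustness_activity_approx:
  assumes "robustness_weights d \<rho> \<noteq> {}" "robustness_activity d \<rho> < s"
  shows "\<exists>t \<in> robustness_weights d \<rho>. t < s"
  using cInf_lessD[OF assms(1)] assms(2) unfolding robustness_activity_eq_Inf by blast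

lemma passive_zero_mem_robustness_weights:
  assumes "passive_state d \<rho>"
  shows "0 \<in> robustness_weights d \<rho>"
  unfolding mem_robustness_weights_iff
  using assms by (intro conjI exI[of _ \<rho>]) (auto simp: passive_state_def)

lemma dim_minus_one_mem_robustness_weights:
  assumes "is_state d \<rho>" "1 \<le> d"
  shows "real d - 1 \<in> robustness_weights d \<rho>"
proof (cases "d = 1")
  case True
  then show ?thesis
    using assms(1) passive_zero_mem_robustness_weights state_dim_one_passive by simp
next
  case False
  let ?c = "real d - 1"
  let ?\<sigma> = "\<lambda>i j. if i < d \<and> j < d then ((if i = j then 1 else 0) - \<rho> i j) / of_real ?c else 0"
  have "0 < ?c" "2 \<le> d" using assms(2) False by auto
  have "\<rho> i j + of_real ?c * ?\<sigma> i j = of_real (1 + ?c) * uniform_state d i j" for i j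
    using \<open>0 < ?c\<close> state_vanishes_outside[OF assms(1), of i j] by (auto simp: uniform_state_def)
  then show ?thesis
    unfolding mem_robustness_weights_iff
    using \<open>0 < ?c\<close> state_complement[OF assms(1) \<open>2 \<le> d\<close>] passive_uniform_state[OF assms(2)]
    by (intro conjI exI) auto
qed

lemma robustness_activity_bounds:
  assumes "is_state d \<rho>" "1 \<le> d"
  shows "0 \<le> robustness_activity d \<rho>" "robustness_activity d \<rho> \<le> real d - 1"
  using dim_minus_one_mem_robustness_weights[OF assms]
  by (auto intro: robustness_activity_nonneg robustness_activity_le)

lemma top_state_weight_lower:
  assumes "t \<in> robustness_weights d (top_state d)" "1 \<le> d"
  shows "real d - 1 \<le> t"
proof -
  obtain \<sigma> \<tau> where "0 \<le> t" "is_state d \<sigma>" "passive_state d \<tau>"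
    and eq: "top_state d (d - 1) (d - 1) + of_real t * \<sigma> (d - 1) (d - 1) = of_real (1 + t) * \<tau> (d - 1) (d - 1)"
    using assms(1) unfolding mem_robustness_weights_iff by blast
  let ?p = "Re (\<tau> (d - 1) (d - 1))"
  have "1 + t * Re (\<sigma> (d - 1) (d - 1)) = (1 + t) * ?p"
    using arg_cong[OF eq, of Re] by (simp add: top_state_def)
  moreover have "0 \<le> t * Re (\<sigma> (d - 1) (d - 1))"
    using \<open>0 \<le> t\<close> state_diag_nonneg[OF \<open>is_state d \<sigma>\<close>] assms(2) by simp
  ultimately have "1 \<le> (1 + t) * ?p" by linarith
  then have "real d \<le> (1 + t) * (real d * ?p)" using assms(2) by (simp add: mult_left_mono)
  also have "\<dots> \<le> 1 + t"
    using passive_last_population_le[OF \<open>passive_state d \<tau>\<close> assms(2)] \<open>0 \<le> t\<close> by (simp add: mult_left_le)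
  finally show ?thesis by simp
qed

lemma robustness_activity_top_state:
  assumes "1 \<le> d"
  shows "robustness_activity d (top_state d) = real d - 1"
proof (rule antisym)
  show "robustness_activity d (top_state d) \<le> real d - 1"
    by (rule robustness_activity_bounds(2)[OF top_state_is_state[OF assms] assms])
  show "real d - 1 \<le> robustness_activity d (top_state d)"
    unfolding robustness_activity_eq_Inf
    using dim_minus_one_mem_robustness_weights[OF top_state_is_state[OF assms] assms]
    by (intro cInf_greatest top_state_weight_lower[OF _ assms]) auto
qed

lemma robustness_weights_offdiag_le:
  assumes "t \<in> robustness_weights d \<rho>" "i < d" "j < d" "i \<noteq> j"
  shows "cmod (\<rho> i j) \<le> t"
proof -
  obtain \<sigma> \<tau> where "0 \<le> t" "is_state d \<sigma>" "passive_state d \<tau>"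
    and eq: "\<rho> i j + of_real t * \<sigma> i j = of_real (1 + t) * \<tau> i j"
    using assms(1) unfolding mem_robustness_weights_iff by blast
  have "\<tau> i j = 0" using \<open>passive_state d \<tau>\<close> assms(4) unfolding passive_state_def by blast
  then have "\<rho> i j = - (of_real t * \<sigma> i j)" using eq by (simp add: eq_neg_iff_add_eq_0)
  then have "cmod (\<rho> i j) = t * cmod (\<sigma> i j)" using \<open>0 \<le> t\<close> by (simp add: norm_mult)
  also have "\<dots> \<le> t"
    using state_entry_norm_le_one[OF \<open>is_state d \<sigma>\<close> assms(2,3)] \<open>0 \<le> t\<close> by (simp add: mult_left_le)
  finally show ?thesis .
qed

lemma robustness_weights_diag_le:
  assumes "t \<in> robustness_weights d \<rho>" "Suc i < d"
  shows "Re (\<rho> (Suc i) (Suc i)) \<le> Re (\<rho> i i) + t"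
proof -
  obtain \<sigma> \<tau> where "0 \<le> t" "is_state d \<sigma>" "passive_state d \<tau>"
    and eq: "\<And>i j. \<rho> i j + of_real t * \<sigma> i j = of_real (1 + t) * \<tau> i j"
    using assms(1) unfolding mem_robustness_weights_iff by blast
  have re_eq: "Re (\<rho> k k) + t * Re (\<sigma> k k) = (1 + t) * Re (\<tau> k k)" for k
    using arg_cong[OF eq[of k k], of Re] by simp
  have "Re (\<tau> (Suc i) (Suc i)) \<le> Re (\<tau> i i)"
    using \<open>passive_state d \<tau>\<close> assms(2) unfolding passive_state_def by blast
  then have "(1 + t) * Re (\<tau> (Suc i) (Suc i)) \<le> (1 + t) * Re (\<tau> i i)"
    using \<open>0 \<le> t\<close> by (intro mult_left_mono) auto
  moreover have "0 \<le> t * Re (\<sigma> (Suc i) (Suc i))" "t * Re (\<sigma> i i) \<le> t"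
    using \<open>0 \<le> t\<close> state_diag_nonneg[OF \<open>is_state d \<sigma>\<close> assms(2)]
      state_diag_le_one[OF \<open>is_state d \<sigma>\<close>, of i] assms(2) by (simp_all add: mult_left_le)
  ultimately show ?thesis using re_eq[of i] re_eq[of "Suc i"] by linarith
qed

lemma robustness_activity_eq_0_iff:
  assumes "is_state d \<rho>" "1 \<le> d"
  shows "robustness_activity d \<rho> = 0 \<longleftrightarrow> passive_state d \<rho>"
proof
  assume "passive_state d \<rho>"
  then show "robustness_activity d \<rho> = 0"
    using robustness_activity_le[OF passive_zero_mem_robustness_weights] robustness_activity_bounds(1)[OF assms]
    by (simp add: antisym)
next
  assume zero: "robustness_activity d \<rho> = 0"
  have nonempty: "robustness_weights d \<rho> \<noteq> {}"
    using dim_minus_one_mem_robustness_weights[OF assms] by blast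
  have small: "\<exists>t \<in> robustness_weights d \<rho>. t < e" if "0 < e" for e
    using robustness_activity_approx[OF nonempty, of e] zero that by simp
  have "\<rho> i j = 0" if "i \<noteq> j" for i j
  proof (cases "i < d \<and> j < d")
    case True
    have "cmod (\<rho> i j) \<le> 0 + e" if "0 < e" for e
      using small[OF that] robustness_weights_offdiag_le True \<open>i \<noteq> j\<close> by fastforce
    then show ?thesis using field_le_epsilon[of "cmod (\<rho> i j)" 0] by simp
  qed (use state_vanishes_outside[OF assms(1)] in blast)
  moreover have "Re (\<rho> (Suc i) (Suc i)) \<le> Re (\<rho> i i)" if "Suc i < d" for i
  proof (rule field_le_epsilon)
    fix e :: real assume "0 < e"
    then show "Re (\<rho> (Suc i) (Suc i)) \<le> Re (\<rho> i i) + e"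
      using small robustness_weights_diag_le[OF _ that] by fastforce
  qed
  ultimately show "passive_state d \<rho>" unfolding passive_state_def using assms(1) by blast
qed

lemma robustness_weights_convex:
  assumes "t1 \<in> robustness_weights d \<rho>1" "t2 \<in> robustness_weights d \<rho>2" "0 \<le> p" "p \<le> 1"
  shows "p * t1 + (1 - p) * t2
           \<in> robustness_weights d (\<lambda>i j. of_real p * \<rho>1 i j + of_real (1 - p) * \<rho>2 i j)"
proof -
  obtain \<sigma>1 \<tau>1 where "0 \<le> t1" "is_state d \<sigma>1" "passive_state d \<tau>1"
    and eq1: "\<And>i j. \<rho>1 i j + of_real t1 * \<sigma>1 i j = of_real (1 + t1) * \<tau>1 i j"
    using assms(1) unfolding mem_robustness_weights_iff by blast
  obtain \<sigma>2 \<tau>2 where "0 \<le> t2" "is_state d \<sigma>2" "passive_state d \<tau>2"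
    and eq2: "\<And>i j. \<rho>2 i j + of_real t2 * \<sigma>2 i j = of_real (1 + t2) * \<tau>2 i j"
    using assms(2) unfolding mem_robustness_weights_iff by blast
  let ?t = "p * t1 + (1 - p) * t2"
  have weights: "0 \<le> p * t1" "0 \<le> (1 - p) * t2" "0 \<le> p * (1 + t1)" "0 \<le> (1 - p) * (1 + t2)"
    using assms(3,4) \<open>0 \<le> t1\<close> \<open>0 \<le> t2\<close> by simp_all
  obtain \<sigma> where "is_state d \<sigma>"
    and \<sigma>: "\<And>i j. of_real (p * t1) * \<sigma>1 i j + of_real ((1 - p) * t2) * \<sigma>2 i j = of_real ?t * \<sigma> i j"
    using cone_combination[where P = "is_state d", OF state_convex_combination
        \<open>is_state d \<sigma>1\<close> \<open>is_state d \<sigma>2\<close> weights(1,2)]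
    by blast
  have total: "p * (1 + t1) + (1 - p) * (1 + t2) = 1 + ?t" by (simp add: algebra_simps)
  obtain \<tau> where "passive_state d \<tau>"
    and \<tau>: "\<And>i j. of_real (p * (1 + t1)) * \<tau>1 i j + of_real ((1 - p) * (1 + t2)) * \<tau>2 i j
               = of_real (1 + ?t) * \<tau> i j"
    using cone_combination[where P = "passive_state d", OF passive_convex_combination
        \<open>passive_state d \<tau>1\<close> \<open>passive_state d \<tau>2\<close> weights(3,4)]
    unfolding total by blast
  have "of_real p * \<rho>1 i j + of_real (1 - p) * \<rho>2 i j + of_real ?t * \<sigma> i j
      = of_real (1 + ?t) * \<tau> i j" for i j
  proof -
    have "of_real p * \<rho>1 i j + of_real (1 - p) * \<rho>2 i j + of_real ?t * \<sigma> i j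
        = of_real p * (\<rho>1 i j + of_real t1 * \<sigma>1 i j) + of_real (1 - p) * (\<rho>2 i j + of_real t2 * \<sigma>2 i j)"
      unfolding \<sigma> [symmetric] by (simp add: algebra_simps)
    also have "\<dots> = of_real (1 + ?t) * \<tau> i j"
      unfolding eq1 eq2 \<tau> [symmetric] by (simp add: algebra_simps)
    finally show ?thesis .
  qed
  then show ?thesis
    unfolding mem_robustness_weights_iff
    using \<open>is_state d \<sigma>\<close> \<open>passive_state d \<tau>\<close> weights by auto
qed

lemma robustness_activity_convex:
  assumes "is_state d \<rho>1" "is_state d \<rho>2" "0 \<le> p" "p \<le> 1" "1 \<le> d"
  shows "robustness_activity d (\<lambda>i j. of_real p * \<rho>1 i j + of_real (1 - p) * \<rho>2 i j)
           \<le> p * robustness_activity d \<rho>1 + (1 - p) * robustness_activity d \<rho>2"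
proof (rule field_le_epsilon)
  fix e :: real assume "0 < e"
  obtain t1 where "t1 \<in> robustness_weights d \<rho>1" "t1 < robustness_activity d \<rho>1 + e"
    using robustness_activity_approx[of d \<rho>1 "robustness_activity d \<rho>1 + e"]
      dim_minus_one_mem_robustness_weights[OF assms(1,5)] \<open>0 < e\<close> by auto
  obtain t2 where "t2 \<in> robustness_weights d \<rho>2" "t2 < robustness_activity d \<rho>2 + e"
    using robustness_activity_approx[of d \<rho>2 "robustness_activity d \<rho>2 + e"]
      dim_minus_one_mem_robustness_weights[OF assms(2,5)] \<open>0 < e\<close> by auto
  have "robustness_activity d (\<lambda>i j. of_real p * \<rho>1 i j + of_real (1 - p) * \<rho>2 i j)
      \<le> p * t1 + (1 - p) * t2"
    by (intro robustness_activity_le robustness_weights_convex) fact+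
  also have "\<dots> \<le> p * (robustness_activity d \<rho>1 + e) + (1 - p) * (robustness_activity d \<rho>2 + e)"
    using \<open>t1 < _\<close> \<open>t2 < _\<close> assms(3,4) by (intro add_mono mult_left_mono) auto
  finally show "robustness_activity d (\<lambda>i j. of_real p * \<rho>1 i j + of_real (1 - p) * \<rho>2 i j)
      \<le> p * robustness_activity d \<rho>1 + (1 - p) * robustness_activity d \<rho>2 + e"
    by (simp add: algebra_simps)
qed

lemma robustness_activity_channel_mono:
  assumes "channel d C" "passivity_preserving d C" "is_state d \<rho>" "1 \<le> d"
  shows "robustness_activity d (C \<rho>) \<le> robustness_activity d \<rho>"
proof -
  obtain n K where "kraus_complete d n K" and C: "C = kraus_map d n K"
    using channel_kraus_map[OF assms(1)] by blast
  have "robustness_weights d \<rho> \<subseteq> robustness_weights d (C \<rho>)"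
  proof
    fix t assume "t \<in> robustness_weights d \<rho>"
    then obtain \<sigma> where "0 \<le> t" "is_state d \<sigma>" "passive_state d (mix_t \<rho> t \<sigma>)"
      unfolding robustness_weights_def by blast
    moreover have "passive_state d (mix_t (C \<rho>) t (C \<sigma>))"
      using assms(2) \<open>passive_state d (mix_t \<rho> t \<sigma>)\<close>
      unfolding passivity_preserving_def C kraus_map_mix_t [symmetric] by blast
    ultimately show "t \<in> robustness_weights d (C \<rho>)"
      using kraus_map_state[OF \<open>kraus_complete d n K\<close>] unfolding robustness_weights_def C by blast
  qed
  then show ?thesis
    unfolding robustness_activity_eq_Inf
    using dim_minus_one_mem_robustness_weights[OF assms(3,4)]
    by (intro cInf_superset_mono robustness_weights_bdd_below) auto
qed

theorem mainTheorem9: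
  fixes d :: nat
  assumes "1 \<le> d"
  shows "(\<forall>\<rho>. is_state d \<rho> \<longrightarrow>
            0 \<le> robustness_activity d \<rho> \<and> robustness_activity d \<rho> \<le> real d - 1)
       \<and> is_state d (top_state d) \<and> robustness_activity d (top_state d) = real d - 1
       \<and> (\<forall>\<rho>. is_state d \<rho> \<longrightarrow> (robustness_activity d \<rho> = 0 \<longleftrightarrow> passive_state d \<rho>))
       \<and> (\<forall>p \<rho>1 \<rho>2. 0 \<le> p \<and> p \<le> 1 \<and> is_state d \<rho>1 \<and> is_state d \<rho>2 \<longrightarrow>
            robustness_activity d (\<lambda>i j. complex_of_real p * \<rho>1 i j + complex_of_real (1 - p) * \<rho>2 i j)
              \<le> p * robustness_activity d \<rho>1 + (1 - p) * robustness_activity d \<rho>2)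
       \<and> (\<forall>C \<rho>. channel d C \<and> passivity_preserving d C \<and> is_state d \<rho> \<longrightarrow>
            robustness_activity d (C \<rho>) \<le> robustness_activity d \<rho>)"
  using robustness_activity_bounds top_state_is_state robustness_activity_top_state
    robustness_activity_eq_0_iff robustness_activity_convex robustness_activity_channel_mono
    assms by blast

end
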